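(* Let $S=\{s_1<\dots<s_{k_1}\}$ and $T=\{t_1<\dots<t_{k_2}\}$ be nonempty subsets of $\{1,\dots,n-1\}$, $d=\gcd\{s+t: s\in S,t\in T\}$, $\mathcal{I}_n=\{-n+1,\dots,n-1\}$, and for positive integers $i$ let $P_i=\{\ell\in\mathcal{I}_n: \ell\equiv is_1\pmod d\}$ and $Q_i=\{\sum_{j=1}^{k_1}a_js_j-\sum_{j=1}^{k_2}b_jt_j\in\mathcal{I}_n : a_j,b_j\in\mathbb{Z}_{\ge0},\ \sum_ja_j+\sum_jb_j=i\}$. Then there exists a positive integer $m^\star$ such that $P_{m^\star}\subseteq Q_{m^\star}$. *)

theory Defs
  imports Main "HOL-Number_Theory.Cong"
begin

definition In_set :: "int \<Rightarrow> int set" where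
  "In_set n = {-n+1..n-1}"

definition gcd_ST :: "int set \<Rightarrow> int set \<Rightarrow> int" where
  "gcd_ST S T = Gcd {s + t | s t. s \<in> S \<and> t \<in> T}"

definition P_set :: "int \<Rightarrow> int set \<Rightarrow> int set \<Rightarrow> nat \<Rightarrow> int set" where
  "P_set n S T i = {l \<in> In_set n. [l = int i * Min S] (mod gcd_ST S T)}"

definition Q_set :: "int \<Rightarrow> int set \<Rightarrow> int set \<Rightarrow> nat \<Rightarrow> int set" where
  "Q_set n S T i = {l \<in> In_set n. \<exists>a b :: int \<Rightarrow> nat.
      l = (\<Sum>s\<in>S. int (a s) * s) - (\<Sum>t\<in>T. int (b t) * t) \<and>
      (\<Sum>s\<in>S. a s) + (\<Sum>t\<in>T. b t) = i}"

end

theory Submission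
  imports Defs "HOL-Computational_Algebra.Euclidean_Algorithm"
begin

(* For s in S and t in T, t copies of s against s copies of t form a signed sum of value 0 and
   length s + t.  Padding a Bezout representation d = (SUM c(s,t) (s + t)) of the gcd d with
   enough of these zero sums makes all coefficients nonnegative; this yields one length j,
   divisible by d, at which every k d with |k| <= 2n is a signed sum.  Since every l in P_(1+j)
   is congruent to s_1 modulo d, it has the form s_1 + k d, so P_(1+j) is contained in Q_(1+j). *)

definition signed_sum :: "int set \<Rightarrow> int set \<Rightarrow> nat \<Rightarrow> int \<Rightarrow> bool" where
  "signed_sum S T i v \<longleftrightarrow> (\<exists>a b :: int \<Rightarrow> nat.
      v = (\<Sum>s\<in>S. int (a s) * s) - (\<Sum>t\<in>T. int (b t) * t) \<and>
      (\<Sum>s\<in>S. a s) + (\<Sum>t\<in>T. b t) = i)"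

lemma Q_set_eq_signed_sum: "Q_set n S T i = {l \<in> In_set n. signed_sum S T i l}"
  by (simp add: Q_set_def signed_sum_def)

lemma signed_sum_zero: "signed_sum S T 0 0"
  unfolding signed_sum_def by (intro exI[of _ "\<lambda>_. 0"]) simp

lemma signed_sum_add:
  assumes "signed_sum S T i v" and "signed_sum S T j w"
  shows "signed_sum S T (i + j) (v + w)"
proof -
  obtain a b where v: "v = (\<Sum>s\<in>S. int (a s) * s) - (\<Sum>t\<in>T. int (b t) * t)"
    and i: "(\<Sum>s\<in>S. a s) + (\<Sum>t\<in>T. b t) = i"
    using assms(1) by (auto simp: signed_sum_def)
  obtain a' b' where w: "w = (\<Sum>s\<in>S. int (a' s) * s) - (\<Sum>t\<in>T. int (b' t) * t)"
    and j: "(\<Sum>s\<in>S. a' s) + (\<Sum>t\<in>T. b' t) = j"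
    using assms(2) by (auto simp: signed_sum_def)
  show ?thesis
    unfolding signed_sum_def
  proof (intro exI conjI)
    show "v + w = (\<Sum>s\<in>S. int (a s + a' s) * s) - (\<Sum>t\<in>T. int (b t + b' t) * t)"
      by (simp add: v w distrib_right sum.distrib)
    show "(\<Sum>s\<in>S. a s + a' s) + (\<Sum>t\<in>T. b t + b' t) = i + j"
      by (simp add: i[symmetric] j[symmetric] sum.distrib)
  qed
qed

lemma signed_sum_sum:
  assumes "finite A" and "\<And>x. x \<in> A \<Longrightarrow> signed_sum S T (i x) (v x)"
  shows "signed_sum S T (\<Sum>x\<in>A. i x) (\<Sum>x\<in>A. v x)"
  using assms by (induction A rule: finite_induct) (auto intro: signed_sum_zero signed_sum_add)

lemma signed_sum_multiple_left:
  assumes "finite S" and "s \<in> S"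
  shows "signed_sum S T j (int j * s)"
  unfolding signed_sum_def
  by (rule exI[of _ "\<lambda>x. if x = s then j else 0"], rule exI[of _ "\<lambda>_. 0"])
    (simp add: assms if_distrib[of int] if_distrib[of "\<lambda>y. y * _"] cong: if_cong)

lemma signed_sum_multiple_right:
  assumes "finite T" and "t \<in> T"
  shows "signed_sum S T j (- (int j * t))"
  unfolding signed_sum_def
  by (rule exI[of _ "\<lambda>_. 0"], rule exI[of _ "\<lambda>x. if x = t then j else 0"])
    (simp add: assms if_distrib[of int] if_distrib[of "\<lambda>y. y * _"] cong: if_cong)

lemma signed_sum_pair_multiple:
  assumes "finite S" "finite T" "s \<in> S" "t \<in> T" "s > 0" "t > 0" and "\<bar>x\<bar> \<le> N"
  shows "signed_sum S T (nat (N * (s + t))) (x * (s + t))"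
proof -
  have "N \<le> N * t" "N \<le> N * s"
    using assms(5-7) mult_left_mono[of 1 t N] mult_left_mono[of 1 s N] by auto
  then have "N * t + x \<ge> 0" "N * s - x \<ge> 0"
    using assms(7) by linarith+
  then have "signed_sum S T (nat (N * t + x) + nat (N * s - x))
      ((N * t + x) * s + - ((N * s - x) * t))"
    using signed_sum_add[OF signed_sum_multiple_left[OF assms(1,3), of T "nat (N * t + x)"]
        signed_sum_multiple_right[OF assms(2,4), of S "nat (N * s - x)"]]
    by simp
  moreover have "nat (N * t + x) + nat (N * s - x) = nat (N * (s + t))"
    using \<open>N * t + x \<ge> 0\<close> \<open>N * s - x \<ge> 0\<close> by (simp add: algebra_simps flip: nat_add_distrib)
  ultimately show ?thesis
    by (simp add: algebra_simps)
qed

lemma Gcd_image_linear_combination: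
  fixes f :: "'b \<Rightarrow> 'a :: euclidean_ring_gcd"
  assumes "finite A"
  shows "\<exists>c. (\<Sum>p\<in>A. c p * f p) = Gcd (f ` A)"
  using assms
proof (induction A rule: finite_induct)
  case empty
  show ?case by simp
next
  case (insert x A)
  then obtain c where c: "(\<Sum>p\<in>A. c p * f p) = Gcd (f ` A)" by blast
  define u v where "u = fst (bezout_coefficients (f x) (Gcd (f ` A)))"
    and "v = snd (bezout_coefficients (f x) (Gcd (f ` A)))"
  have "(\<Sum>p\<in>insert x A. (if p = x then u else v * c p) * f p)
      = u * f x + v * (\<Sum>p\<in>A. c p * f p)"
    using insert by (auto simp: sum_distrib_left mult.assoc intro!: sum.cong)
  also have "\<dots> = Gcd (f ` insert x A)"
    by (simp add: c u_def v_def bezout_coefficients_fst_snd)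
  finally show ?case by (rule exI[where x = "\<lambda>p. if p = x then u else v * c p"])
qed

lemma gcd_ST_eq_Gcd_image: "gcd_ST S T = Gcd ((\<lambda>(s, t). s + t) ` (S \<times> T))"
  unfolding gcd_ST_def by (rule arg_cong[where f = Gcd]) force

lemma signed_sum_bounded_multiples_gcd_ST:
  assumes "finite S" "finite T" "S \<subseteq> {0<..}" "T \<subseteq> {0<..}"
  shows "\<exists>j. gcd_ST S T dvd int j \<and>
    (\<forall>k. \<bar>k\<bar> \<le> K \<longrightarrow> signed_sum S T j (k * gcd_ST S T))"
proof -
  let ?d = "gcd_ST S T"
  let ?f = "\<lambda>(s, t). s + t :: int"
  have fin: "finite (S \<times> T)" using assms(1,2) by simp
  obtain c where c: "(\<Sum>p\<in>S \<times> T. c p * ?f p) = ?d"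
    using Gcd_image_linear_combination[OF fin, of ?f] by (auto simp: gcd_ST_eq_Gcd_image)
  define N where "N = \<bar>K\<bar> * (\<Sum>p\<in>S \<times> T. \<bar>c p\<bar>)"
  define j where "j = (\<Sum>p\<in>S \<times> T. nat (N * ?f p))"
  have pos: "s > 0" "t > 0" if "s \<in> S" "t \<in> T" for s t
    using that assms(3,4) by auto
  have N_nonneg: "N \<ge> 0"
    by (simp add: N_def sum_nonneg)
  have count_nonneg: "N * ?f p \<ge> 0" if "p \<in> S \<times> T" for p
    using that N_nonneg pos by (auto intro: mult_nonneg_nonneg simp: less_imp_le)
  show ?thesis
  proof (intro exI conjI allI impI)
    have "int j = (\<Sum>p\<in>S \<times> T. N * ?f p)"
      unfolding j_def of_nat_sum using count_nonneg by (intro sum.cong) auto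
    also have "?d dvd \<dots>"
      unfolding gcd_ST_eq_Gcd_image by (intro dvd_sum dvd_mult Gcd_dvd imageI)
    finally show "?d dvd int j" .
  next
    fix k assume "\<bar>k\<bar> \<le> K"
    have "\<bar>k * c p\<bar> \<le> N" if "p \<in> S \<times> T" for p
    proof -
      have "\<bar>k * c p\<bar> \<le> \<bar>K\<bar> * \<bar>c p\<bar>"
        using \<open>\<bar>k\<bar> \<le> K\<close> by (simp add: abs_mult mult_right_mono)
      also have "\<dots> \<le> N"
        unfolding N_def using fin that by (intro mult_left_mono member_le_sum) auto
      finally show ?thesis .
    qed
    then have "signed_sum S T j (\<Sum>p\<in>S \<times> T. k * c p * ?f p)"
      unfolding j_def using assms(1,2)
      by (intro signed_sum_sum[OF fin]) (auto intro!: signed_sum_pair_multiple dest: pos)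
    also have "(\<Sum>p\<in>S \<times> T. k * c p * ?f p) = k * ?d"
      by (simp add: c[symmetric] sum_distrib_left mult.assoc)
    finally show "signed_sum S T j (k * ?d)" .
  qed
qed

lemma dvd_imp_bounded_quotient:
  fixes d x :: int
  assumes "d dvd x"
  shows "\<exists>k. x = k * d \<and> \<bar>k\<bar> \<le> \<bar>x\<bar>"
proof (cases "d = 0")
  case True
  with assms show ?thesis by simp
next
  case False
  from assms obtain k where "x = k * d" by (metis dvd_def mult.commute)
  moreover have "\<bar>k\<bar> \<le> \<bar>k * d\<bar>"
    using False mult_left_mono[of 1 "\<bar>d\<bar>" "\<bar>k\<bar>"] by (simp add: abs_mult)
  ultimately show ?thesis by blast
qed

lemma P_set_Suc_eq:
  assumes "gcd_ST S T dvd int j"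
  shows "P_set n S T (Suc j) = {l \<in> In_set n. gcd_ST S T dvd l - Min S}"
proof -
  have "[int (Suc j) * Min S = Min S] (mod gcd_ST S T)"
    using assms by (simp add: cong_iff_dvd_diff algebra_simps)
  then show ?thesis
    unfolding P_set_def by (metis (no_types, opaque_lifting) cong_iff_dvd_diff cong_sym cong_trans)
qed

theorem theorem4p3:
  fixes n :: int and S T :: "int set"
  assumes "S \<noteq> {}" and "T \<noteq> {}"
    and "S \<subseteq> {1..n-1}" and "T \<subseteq> {1..n-1}"
  shows "\<exists>m::nat. m > 0 \<and> P_set n S T m \<subseteq> Q_set n S T m"
proof -
  let ?d = "gcd_ST S T" and ?s1 = "Min S"
  have fin: "finite S" "finite T"
    using assms(3,4) finite_subset by auto
  have s1: "?s1 \<in> S" using fin(1) assms(1) by simp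
  obtain j where d_dvd_j: "?d dvd int j"
    and multiples: "\<And>k. \<bar>k\<bar> \<le> 2 * n \<Longrightarrow> signed_sum S T j (k * ?d)"
    using signed_sum_bounded_multiples_gcd_ST[OF fin, of "2 * n"] assms(3,4) by fastforce
  have "P_set n S T (Suc j) \<subseteq> Q_set n S T (Suc j)"
  proof
    fix l assume "l \<in> P_set n S T (Suc j)"
    then have l: "l \<in> In_set n" and "?d dvd l - ?s1"
      by (simp_all add: P_set_Suc_eq[OF d_dvd_j])
    then obtain k where "l - ?s1 = k * ?d" and "\<bar>k\<bar> \<le> \<bar>l - ?s1\<bar>"
      using dvd_imp_bounded_quotient by blast
    moreover have "\<bar>l - ?s1\<bar> \<le> 2 * n"
      using l s1 assms(3) by (force simp: In_set_def)
    ultimately have "signed_sum S T j (l - ?s1)"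
      using multiples by simp
    then have "signed_sum S T (1 + j) (?s1 + (l - ?s1))"
      using signed_sum_add signed_sum_multiple_left[OF fin(1) s1, of T 1] by fastforce
    with l show "l \<in> Q_set n S T (Suc j)"
      by (simp add: Q_set_eq_signed_sum)
  qed
  then show ?thesis by blast
qed

end
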